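(* Let $G$ be a connected graph with $n$ vertices. (a) If $n=12$, then $\frac{q(G)}{R(G)}\le \frac{11}{3}$, with equality if and only if $G=K_{12}$. (b) If $n\ge 13$, then $\frac{q(G)}{R(G)}\le \frac{n}{\sqrt{n-1}}$, with equality if and only if $G=S_n$.
   Context: All graphs are finite and simple. For a graph $G$ and a vertex $u$, $d(u)$ denotes the degree of $u$. The Randić index is $R(G)=\sum_{\{u,v\}\in E(G)} \frac{1}{\sqrt{d(u)d(v)}}$. The signless Laplacian matrix of $G$ is $Q=D+A$, where $D$ is the diagonal matrix of vertex degrees and $A$ is the adjacency matrix; $q(G)$ denotes the largest eigenvalue of $Q$. $K_n$ is the complete graph and $S_n$ the star on $n$ vertices. *)

theory Defs
  imports "HOL-Analysis.Analysis"
begin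

text \<open>A finite simple graph on the vertex set UNIV of a finite type 'a,
  given by its edge set: a set of 2-element subsets of the vertices.\<close>

definition simple_graph :: "'a set set \<Rightarrow> bool" where
  "simple_graph E \<longleftrightarrow> (\<forall>e\<in>E. card e = 2)"

definition adj :: "'a set set \<Rightarrow> 'a \<Rightarrow> 'a \<Rightarrow> bool" where
  "adj E u v \<longleftrightarrow> {u, v} \<in> E"

definition connected_graph :: "'a set set \<Rightarrow> bool" where
  "connected_graph E \<longleftrightarrow> (\<forall>u v. (adj E)\<^sup>*\<^sup>* u v)"

definition degree :: "'a set set \<Rightarrow> 'a \<Rightarrow> nat" where
  "degree E u = card {e \<in> E. u \<in> e}"

definition randic :: "'a set set \<Rightarrow> real" where
  "randic E = (\<Sum>e\<in>E. 1 / sqrt (\<Prod>u\<in>e. real (degree E u)))"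

definition signless_laplacian :: "('a::finite) set set \<Rightarrow> real^'a^'a" where
  "signless_laplacian E = (\<chi> i j. (if i = j then real (degree E i) else 0)
                                  + (if adj E i j then 1 else 0))"

definition is_eigenvalue :: "real^'n^'n \<Rightarrow> real \<Rightarrow> bool" where
  "is_eigenvalue M \<mu> \<longleftrightarrow> (\<exists>x. x \<noteq> 0 \<and> M *v x = \<mu> *\<^sub>R x)"

definition q_index :: "('a::finite) set set \<Rightarrow> real" where
  "q_index E = Max {\<mu>. is_eigenvalue (signless_laplacian E) \<mu>}"

definition is_complete_graph :: "'a set set \<Rightarrow> bool" where
  "is_complete_graph E \<longleftrightarrow> (\<forall>u v. u \<noteq> v \<longrightarrow> adj E u v)"

definition is_star_graph :: "'a set set \<Rightarrow> bool" where
  "is_star_graph E \<longleftrightarrow> (\<exists>c. E = {{c, v} | v. v \<noteq> c})"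

end

(* Every eigenvalue of Q is at most d(u) + m(u), where u maximises |x u| / d(u) for an
   eigenvector x and m(u) is the average degree of the neighbours of u; bounding d(u) + m(u)
   gives Das' bound q(G) <= 2|E|/(n-1) + n - 2. Since the sum over all edges uv of
   1/d(u) + 1/d(v) equals n, the difference c R(G) - (2|E|/(n-1) + n - 2) is a sum over the
   edges of a function of the two end degrees alone. Substituting x = 1/sqrt d(u) and bounding
   x^2 by its chord on [1/sqrt(n-1), 1] reduces the nonnegativity of each summand to three
   corner values, which is what singles out the constants 11/3 for n = 12 and n/sqrt(n-1) for
   n >= 13. Equality forces every edge to join two vertices of degree 11, respectively a leaf to
   a centre, and Das' bound to be an eigenvalue of Q. *)

theory Submission
  imports Defs
begin

section \<open>Degrees and neighbourhoods\<close>

definition neighbours :: "'a set set \<Rightarrow> 'a \<Rightarrow> 'a set" where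
  "neighbours E u = {v. adj E u v}"

lemma adj_commute: "adj E u v \<longleftrightarrow> adj E v u"
  unfolding adj_def by (simp add: insert_commute)

lemma adj_imp_neq: "simple_graph E \<Longrightarrow> adj E u v \<Longrightarrow> u \<noteq> v"
  unfolding adj_def simple_graph_def by fastforce

lemma simple_graph_edgeE:
  assumes "simple_graph E" "e \<in> E"
  obtains a b where "a \<noteq> b" "e = {a, b}" "adj E a b"
  using assms unfolding simple_graph_def adj_def by (metis card_2_iff)

lemma edges_at_vertex:
  assumes "simple_graph E"
  shows "{e \<in> E. u \<in> e} = (\<lambda>v. {u, v}) ` neighbours E u"
proof (intro equalityI subsetI)
  fix e assume "e \<in> {e \<in> E. u \<in> e}"
  then obtain a b where "u \<in> e" "e = {a, b}" "adj E a b"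
    using simple_graph_edgeE[OF assms] by blast
  then show "e \<in> (\<lambda>v. {u, v}) ` neighbours E u"
    by (auto simp: neighbours_def adj_commute insert_commute)
qed (auto simp: neighbours_def adj_def)

lemma degree_eq_card_neighbours:
  assumes "simple_graph E"
  shows "degree E u = card (neighbours E u)"
  unfolding degree_def edges_at_vertex[OF assms]
  by (rule card_image) (auto simp: inj_on_def doubleton_eq_iff)

lemma neighbours_subset: "simple_graph E \<Longrightarrow> neighbours E u \<subseteq> UNIV - {u}"
  using adj_imp_neq[of E u] by (auto simp: neighbours_def)

lemma degree_le_card:
  fixes E :: "('a::finite) set set"
  assumes "simple_graph E"
  shows "degree E u \<le> CARD('a) - 1"
proof -
  have "card (neighbours E u) \<le> card (UNIV - {u})"
    using neighbours_subset[OF assms] by (intro card_mono) auto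
  then show ?thesis by (simp add: degree_eq_card_neighbours[OF assms] card_Diff_singleton)
qed

lemma degree_eq_card_iff:
  fixes E :: "('a::finite) set set"
  assumes "simple_graph E"
  shows "degree E u = CARD('a) - 1 \<longleftrightarrow> neighbours E u = UNIV - {u}"
proof
  assume "degree E u = CARD('a) - 1"
  then show "neighbours E u = UNIV - {u}"
    using neighbours_subset[OF assms]
    by (intro card_subset_eq) (auto simp: degree_eq_card_neighbours[OF assms] card_Diff_singleton)
qed (simp add: degree_eq_card_neighbours[OF assms] card_Diff_singleton)

lemma connected_graph_has_neighbour:
  fixes E :: "('a::finite) set set"
  assumes "connected_graph E" "CARD('a) \<ge> 2"
  obtains v where "adj E u v"
proof -
  obtain v :: 'a where "v \<noteq> u"
  proof -
    have "card (UNIV - {u}) \<noteq> 0"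
      using assms(2) by (simp add: card_Diff_singleton)
    then obtain v where "v \<in> UNIV - {u}" by (metis card.empty ex_in_conv)
    then show ?thesis using that by blast
  qed
  moreover have "(adj E)\<^sup>*\<^sup>* u v"
    using assms(1) unfolding connected_graph_def by blast
  ultimately show ?thesis
    using that by (metis converse_rtranclpE)
qed

lemma degree_ge_one:
  fixes E :: "('a::finite) set set"
  assumes "simple_graph E" "connected_graph E" "CARD('a) \<ge> 2"
  shows "degree E u \<ge> 1"
proof -
  obtain v where "adj E u v" using connected_graph_has_neighbour[OF assms(2,3)] .
  then have "neighbours E u \<noteq> {}" by (auto simp: neighbours_def)
  then show ?thesis by (simp add: degree_eq_card_neighbours[OF assms(1)] Suc_le_eq card_gt_0_iff)
qed

lemma sum_edges_sum_vertices:
  fixes E :: "('a::finite) set set" and f :: "'a \<Rightarrow> real"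
  shows "(\<Sum>e\<in>E. \<Sum>v\<in>e. f v) = (\<Sum>v\<in>UNIV. real (degree E v) * f v)"
proof -
  have "(\<Sum>v\<in>e. f v) = (\<Sum>v\<in>UNIV. if v \<in> e then f v else 0)" for e
    using sum.inter_restrict[where A = UNIV and B = e and g = f] by simp
  then have "(\<Sum>e\<in>E. \<Sum>v\<in>e. f v) = (\<Sum>e\<in>E. \<Sum>v\<in>UNIV. if v \<in> e then f v else 0)"
    by simp
  also have "\<dots> = (\<Sum>v\<in>UNIV. \<Sum>e\<in>E. if v \<in> e then f v else 0)"
    by (rule sum.swap)
  also have "\<dots> = (\<Sum>v\<in>UNIV. real (degree E v) * f v)"
    by (intro sum.cong refl) (simp add: sum.If_cases degree_def Int_def conj_commute)
  finally show ?thesis .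
qed

lemma sum_degrees:
  fixes E :: "('a::finite) set set"
  assumes "simple_graph E"
  shows "(\<Sum>v\<in>UNIV. real (degree E v)) = 2 * real (card E)"
proof -
  have "(\<Sum>e\<in>E. \<Sum>v\<in>e. (1::real)) = (\<Sum>v\<in>UNIV. real (degree E v) * 1)"
    by (rule sum_edges_sum_vertices)
  moreover have "(\<Sum>e\<in>E. \<Sum>v\<in>e. (1::real)) = (\<Sum>e\<in>E. 2)"
    using assms unfolding simple_graph_def by (intro sum.cong) auto
  ultimately show ?thesis by simp
qed

section \<open>Eigenvalues of symmetric matrices\<close>

lemma symmetric_matrix_inner:
  fixes A :: "real^'n^'n"
  assumes "transpose A = A"
  shows "y \<bullet> (A *v x) = x \<bullet> (A *v y)"
proof -
  have "y \<bullet> (A *v x) = (y v* A) \<bullet> x" by (simp add: dot_lmul_matrix)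
  also have "y v* A = A *v y" using vector_transpose_matrix[of y A] assms by simp
  finally show ?thesis by (simp add: inner_commute)
qed

lemma symmetric_matrix_eigenvectors_orthogonal:
  fixes A :: "real^'n^'n"
  assumes "transpose A = A" "A *v x = \<mu> *\<^sub>R x" "A *v y = \<nu> *\<^sub>R y" "\<mu> \<noteq> \<nu>"
  shows "orthogonal x y"
proof -
  have "\<nu> * (x \<bullet> y) = \<mu> * (x \<bullet> y)"
    using symmetric_matrix_inner[OF assms(1), of x y] assms(2,3) by (simp add: inner_commute)
  then show ?thesis using assms(4) by (simp add: orthogonal_def)
qed

lemma finite_eigenvalues_symmetric_matrix:
  fixes A :: "real^'n^'n"
  assumes "transpose A = A"
  shows "finite {\<mu>. is_eigenvalue A \<mu>}"
proof -
  define S where "S = {\<mu>. is_eigenvalue A \<mu>}"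
  define v where "v \<mu> = (SOME x. x \<noteq> 0 \<and> A *v x = \<mu> *\<^sub>R x)" for \<mu>
  have v: "v \<mu> \<noteq> 0" "A *v v \<mu> = \<mu> *\<^sub>R v \<mu>" if "\<mu> \<in> S" for \<mu>
    using someI_ex[of "\<lambda>x. x \<noteq> 0 \<and> A *v x = \<mu> *\<^sub>R x"] that
    unfolding S_def v_def is_eigenvalue_def by auto
  have inj: "inj_on v S"
  proof
    fix \<mu> \<nu> assume "\<mu> \<in> S" "\<nu> \<in> S" "v \<mu> = v \<nu>"
    then have "(\<mu> - \<nu>) *\<^sub>R v \<mu> = 0" using v by (metis scaleR_diff_left diff_self)
    then show "\<mu> = \<nu>" using v(1)[OF \<open>\<mu> \<in> S\<close>] by simp
  qed
  have "pairwise orthogonal (v ` S)"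
    unfolding pairwise_def
    using symmetric_matrix_eigenvectors_orthogonal[OF assms] v by blast
  moreover have "0 \<notin> v ` S" using v(1) by auto
  ultimately have "finite (v ` S)"
    using pairwise_orthogonal_independent independent_bound by blast
  then show ?thesis unfolding S_def[symmetric] using finite_imageD inj by blast
qed

text \<open>Moving from x a little in the direction -Mx would make the form negative.\<close>

lemma psd_form_zero_imp_null:
  fixes M :: "real^'n^'n"
  assumes sym: "transpose M = M" and psd: "\<And>y. y \<bullet> (M *v y) \<ge> 0"
    and zero: "x \<bullet> (M *v x) = 0"
  shows "M *v x = 0"
proof (rule ccontr)
  define w where "w = M *v x"
  assume "M *v x \<noteq> 0"
  then have ww: "w \<bullet> w > 0" unfolding w_def by simp
  have expand: "(x + t *\<^sub>R w) \<bullet> (M *v (x + t *\<^sub>R w)) = 2 * t * (w \<bullet> w) + t^2 * (w \<bullet> (M *v w))" for t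
    using zero symmetric_matrix_inner[OF sym, of x w]
    by (simp add: matrix_vector_right_distrib matrix_vector_mult_scaleR inner_add_left
        inner_add_right inner_commute[of x] algebra_simps power2_eq_square w_def)
  define s where "s = (w \<bullet> w) / (w \<bullet> (M *v w) + 1)"
  have q: "w \<bullet> (M *v w) \<ge> 0" by (rule psd)
  have "s > 0" unfolding s_def using ww q by simp
  moreover have "s * (w \<bullet> (M *v w)) < 2 * (w \<bullet> w)"
    unfolding s_def using ww q by (simp add: field_simps) (intro add_pos_nonneg; simp)
  ultimately have "2 * (-s) * (w \<bullet> w) + (-s)^2 * (w \<bullet> (M *v w)) < 0"
    by (simp add: power2_eq_square algebra_simps mult_pos_neg)
  then show False using psd[of "x + (-s) *\<^sub>R w"] unfolding expand by linarith
qed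

lemma symmetric_matrix_has_eigenvalue:
  fixes A :: "real^'n^'n"
  assumes sym: "transpose A = A"
  shows "\<exists>\<mu>. is_eigenvalue A \<mu>"
proof -
  define f where "f y = y \<bullet> (A *v y)" for y
  have "continuous_on (sphere 0 1) f"
    unfolding f_def by (intro continuous_intros linear_continuous_on matrix_vector_mul_bounded_linear)
  moreover have "sphere (0::real^'n) 1 \<noteq> {}"
    using norm_axis_1[of undefined] by (metis dist_0_norm mem_sphere empty_iff)
  ultimately obtain x where x: "x \<in> sphere 0 1" and max: "\<And>y. y \<in> sphere 0 1 \<Longrightarrow> f y \<le> f x"
    using continuous_attains_sup[OF compact_sphere] by blast
  define M where "M = f x *\<^sub>R mat 1 - A"
  have M: "M *v y = f x *\<^sub>R y - A *v y" for y
    unfolding M_def by (simp add: matrix_vector_mult_diff_rdistrib scaleR_matrix_vector_assoc[symmetric])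
  have "y \<bullet> (M *v y) \<ge> 0" for y
  proof (cases "y = 0")
    case False
    have "f ((1 / norm y) *\<^sub>R y) \<le> f x" using False by (intro max) simp
    then have "f y \<le> f x * (norm y)^2"
      using False by (simp add: f_def matrix_vector_mult_scaleR power_divide field_simps power2_eq_square)
    then show ?thesis unfolding M by (simp add: inner_diff_right f_def dot_square_norm)
  qed simp
  moreover have "x \<bullet> (M *v x) = 0"
    using x unfolding M by (simp add: inner_diff_right f_def dot_square_norm)
  moreover have "transpose M = M" unfolding M_def using sym by (simp add: transpose_def vec_eq_iff mat_def)
  ultimately have "M *v x = 0" using psd_form_zero_imp_null by blast
  moreover have "x \<noteq> 0" using x by auto
  ultimately show ?thesis unfolding is_eigenvalue_def M by (metis eq_iff_diff_eq_0)
qed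

section \<open>Das' bound for the signless Laplacian\<close>

lemma signless_laplacian_mult_vec:
  fixes E :: "('a::finite) set set"
  assumes "simple_graph E"
  shows "(signless_laplacian E *v x) $ u = real (degree E u) * x $ u + (\<Sum>v\<in>neighbours E u. x $ v)"
proof -
  have "(signless_laplacian E *v x) $ u
      = (\<Sum>v\<in>UNIV. (if u = v then real (degree E u) * x $ v else 0))
        + (\<Sum>v\<in>UNIV. if v \<in> neighbours E u then x $ v else 0)"
    unfolding sum.distrib[symmetric] using adj_imp_neq[OF assms, of u u]
    by (simp add: matrix_vector_mult_def signless_laplacian_def)
       (intro sum.cong, auto simp: neighbours_def)
  also have "\<dots> = real (degree E u) * x $ u + (\<Sum>v\<in>neighbours E u. x $ v)"
    using sum.inter_restrict[where A = UNIV and B = "neighbours E u" and g = "\<lambda>v. x $ v"] by simp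
  finally show ?thesis .
qed

lemma transpose_signless_laplacian: "transpose (signless_laplacian E) = signless_laplacian E"
  unfolding transpose_def signless_laplacian_def vec_eq_iff by (auto simp: adj_commute)

lemma is_eigenvalue_signless_laplacianI:
  fixes E :: "('a::finite) set set"
  assumes "simple_graph E" "x \<noteq> 0"
    and "\<And>u. real (degree E u) * x $ u + (\<Sum>v\<in>neighbours E u. x $ v) = \<mu> * x $ u"
  shows "is_eigenvalue (signless_laplacian E) \<mu>"
proof -
  have "signless_laplacian E *v x = \<mu> *\<^sub>R x"
    unfolding vec_eq_iff signless_laplacian_mult_vec[OF assms(1)] using assms(3) by simp
  then show ?thesis unfolding is_eigenvalue_def using assms(2) by blast
qed

lemma q_index_is_eigenvalue: "is_eigenvalue (signless_laplacian E) (q_index E)"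
proof -
  have "finite {\<mu>. is_eigenvalue (signless_laplacian E) \<mu>}"
    by (rule finite_eigenvalues_symmetric_matrix[OF transpose_signless_laplacian])
  moreover have "{\<mu>. is_eigenvalue (signless_laplacian E) \<mu>} \<noteq> {}"
    using symmetric_matrix_has_eigenvalue[OF transpose_signless_laplacian] by blast
  ultimately show ?thesis unfolding q_index_def using Max_in by blast
qed

lemma eigenvalue_le_q_index: "is_eigenvalue (signless_laplacian E) \<mu> \<Longrightarrow> \<mu> \<le> q_index E"
  unfolding q_index_def
  by (rule Max_ge[OF finite_eigenvalues_symmetric_matrix[OF transpose_signless_laplacian]]) simp

lemma eigenvalue_le_degree_plus_average:
  fixes E :: "('a::finite) set set"
  assumes sg: "simple_graph E" and deg: "\<And>u. degree E u \<ge> 1"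
    and ev: "is_eigenvalue (signless_laplacian E) \<mu>"
  obtains u where "\<mu> \<le> real (degree E u) + (\<Sum>v\<in>neighbours E u. real (degree E v)) / real (degree E u)"
proof -
  obtain x where x: "x \<noteq> 0" "signless_laplacian E *v x = \<mu> *\<^sub>R x"
    using ev unfolding is_eigenvalue_def by blast
  define D where "D v = real (degree E v)" for v
  have D: "D v \<ge> 1" for v unfolding D_def using deg[of v] by simp
  define r where "r v = \<bar>x $ v\<bar> / D v" for v
  have "Max (range r) \<in> range r" by (rule Max_in) auto
  then obtain u where "r u = Max (range r)" by (metis rangeE)
  then have u: "r v \<le> r u" for v by simp
  obtain v0 where "x $ v0 \<noteq> 0" using x(1) by (metis vec_eq_iff zero_index)
  then have "r v0 > 0" unfolding r_def using D[of v0] by simp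
  then have "r u > 0" using u[of v0] by linarith
  then have xu: "\<bar>x $ u\<bar> > 0" using D[of u] unfolding r_def by (simp add: zero_less_divide_iff)
  have "D u * x $ u + (\<Sum>v\<in>neighbours E u. x $ v) = \<mu> * x $ u"
    using arg_cong[OF x(2), of "\<lambda>y. y $ u"] by (simp add: signless_laplacian_mult_vec[OF sg] D_def)
  then have "\<bar>\<mu> - D u\<bar> * \<bar>x $ u\<bar> = \<bar>\<Sum>v\<in>neighbours E u. x $ v\<bar>"
    by (simp add: abs_mult[symmetric] algebra_simps)
  also have "\<dots> \<le> (\<Sum>v\<in>neighbours E u. \<bar>x $ v\<bar>)" by (rule sum_abs)
  also have "\<dots> \<le> (\<Sum>v\<in>neighbours E u. D v * r u)"
  proof (rule sum_mono)
    fix v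
    have "\<bar>x $ v\<bar> = D v * r v" unfolding r_def using D[of v] by simp
    then show "\<bar>x $ v\<bar> \<le> D v * r u" using u[of v] D[of v] by simp
  qed
  also have "\<dots> = ((\<Sum>v\<in>neighbours E u. D v) / D u) * \<bar>x $ u\<bar>"
    unfolding r_def by (simp add: sum_distrib_right sum_divide_distrib)
  finally have "\<bar>\<mu> - D u\<bar> \<le> (\<Sum>v\<in>neighbours E u. D v) / D u"
    using xu by (rule mult_right_le_imp_le)
  then have "\<mu> \<le> D u + (\<Sum>v\<in>neighbours E u. D v) / D u" using abs_le_D1 by fastforce
  then show ?thesis using that unfolding D_def by blast
qed

definition das_bound :: "('a::finite) set set \<Rightarrow> real" where
  "das_bound E = 2 * real (card E) / (real CARD('a) - 1) + real CARD('a) - 2"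

lemma degree_plus_average_le:
  fixes d S N :: real
  assumes "1 \<le> d" "d \<le> N" "S \<le> d * N"
  shows "d + S / d \<le> S / N + N"
proof -
  have "d * N * (S / N + N - d - S / d) = (N - d) * (d * N - S)"
    using assms by (simp add: field_simps)
  also have "\<dots> \<ge> 0" using assms by simp
  finally have "0 \<le> d * N * (S / N + N - d - S / d)" .
  moreover have "d * N > 0" using assms by simp
  ultimately have "S / N + N - d - S / d \<ge> 0" by (simp add: zero_le_mult_iff)
  then show ?thesis by simp
qed

text \<open>The vertices outside the closed neighbourhood of u have degree at least 1, so the
  neighbours of u carry at most 2|E| - (n - 1) of the degree sum.\<close>

lemma degree_plus_average_le_das_bound:
  fixes E :: "('a::finite) set set"
  assumes sg: "simple_graph E" and deg: "\<And>u. degree E u \<ge> 1" and n: "CARD('a) \<ge> 2"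
  shows "real (degree E u) + (\<Sum>v\<in>neighbours E u. real (degree E v)) / real (degree E u) \<le> das_bound E"
proof -
  define D where "D v = real (degree E v)" for v
  define N where "N = neighbours E u"
  define S where "S = (\<Sum>v\<in>N. D v)"
  define n where "n = real CARD('a)"
  have uN: "u \<notin> N" using neighbours_subset[OF sg] unfolding N_def by auto
  have cN: "card N = degree E u" unfolding N_def by (simp add: degree_eq_card_neighbours[OF sg])
  have Dn: "D v \<le> n - 1" for v unfolding D_def n_def using degree_le_card[OF sg, of v] n by linarith
  have S: "S \<le> D u * (n - 1)"
    using sum_mono[of N D "\<lambda>_. n - 1", OF Dn] cN unfolding S_def D_def by simp
  have "card (UNIV - insert u N) = CARD('a) - Suc (degree E u)"
    using uN cN by (simp add: card_Diff_subset)
  moreover have "Suc (degree E u) \<le> CARD('a)"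
    using uN cN card_mono[of UNIV "insert u N"] by simp
  ultimately have "n - 1 - D u = (\<Sum>v\<in>UNIV - insert u N. 1)"
    unfolding n_def D_def by (simp add: of_nat_diff)
  also have "\<dots> \<le> (\<Sum>v\<in>UNIV - insert u N. D v)" unfolding D_def using deg by (intro sum_mono) simp
  also have "\<dots> = 2 * real (card E) - D u - S"
    using sum.subset_diff[of "insert u N" UNIV D] uN sum_degrees[OF sg] unfolding S_def D_def by simp
  finally have "S / (n - 1) \<le> (2 * real (card E) - (n - 1)) / (n - 1)"
    using n unfolding n_def by (intro divide_right_mono) auto
  also have "\<dots> = 2 * real (card E) / (n - 1) - 1"
    using n unfolding n_def by (simp add: diff_divide_distrib)
  finally have "S / (n - 1) + (n - 1) \<le> 2 * real (card E) / (n - 1) + n - 2" by simp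
  moreover have "D u + S / D u \<le> S / (n - 1) + (n - 1)"
    using degree_plus_average_le[OF _ Dn S] deg[of u] unfolding D_def by simp
  ultimately show ?thesis unfolding das_bound_def D_def S_def N_def n_def by linarith
qed

lemma q_index_le_das_bound:
  fixes E :: "('a::finite) set set"
  assumes "simple_graph E" "\<And>u. degree E u \<ge> 1" "CARD('a) \<ge> 2"
  shows "q_index E \<le> das_bound E"
proof -
  obtain u where "q_index E \<le> real (degree E u)
      + (\<Sum>v\<in>neighbours E u. real (degree E v)) / real (degree E u)"
    using eigenvalue_le_degree_plus_average[OF assms(1,2) q_index_is_eigenvalue] .
  also have "\<dots> \<le> das_bound E" by (rule degree_plus_average_le_das_bound[OF assms])
  finally show ?thesis .
qed

lemma q_index_eq_das_bound_iff:
  fixes E :: "('a::finite) set set"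
  assumes "simple_graph E" "\<And>u. degree E u \<ge> 1" "CARD('a) \<ge> 2"
  shows "q_index E = das_bound E \<longleftrightarrow> is_eigenvalue (signless_laplacian E) (das_bound E)"
  using q_index_is_eigenvalue[of E] eigenvalue_le_q_index[of E "das_bound E"]
    q_index_le_das_bound[OF assms] by auto

section \<open>The Randic index edge by edge\<close>

lemma randic_pos:
  fixes E :: "('a::finite) set set"
  assumes sg: "simple_graph E" and conn: "connected_graph E" and n: "CARD('a) \<ge> 2"
  shows "randic E > 0"
proof -
  obtain v where "adj E undefined v" by (rule connected_graph_has_neighbour[OF conn n])
  then have "E \<noteq> {}" unfolding adj_def by blast
  moreover have "1 / sqrt (\<Prod>u\<in>e. real (degree E u)) > 0" if "e \<in> E" for e
  proof -
    obtain a b where "a \<noteq> b" "e = {a, b}" using simple_graph_edgeE[OF sg \<open>e \<in> E\<close>] .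
    then show ?thesis using degree_ge_one[OF sg conn n, of a] degree_ge_one[OF sg conn n, of b] by simp
  qed
  ultimately show ?thesis unfolding randic_def by (intro sum_pos) simp_all
qed

lemma randic_minus_das_bound:
  fixes E :: "('a::finite) set set"
  assumes deg: "\<And>u. degree E u \<ge> 1"
  defines "n \<equiv> real CARD('a)"
  shows "c * randic E - das_bound E = (\<Sum>e\<in>E. c / sqrt (\<Prod>u\<in>e. real (degree E u))
           - 2 / (n - 1) - (n - 2) / n * (\<Sum>v\<in>e. 1 / real (degree E v)))"
proof -
  have "(\<Sum>e\<in>E. \<Sum>v\<in>e. 1 / real (degree E v)) = (\<Sum>v\<in>UNIV. real (degree E v) * (1 / real (degree E v)))"
    by (rule sum_edges_sum_vertices)
  also have "\<dots> = n"
  proof -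
    have "real (degree E v) * (1 / real (degree E v)) = 1" for v using deg[of v] by simp
    then show ?thesis unfolding n_def by simp
  qed
  finally have inv: "(\<Sum>e\<in>E. \<Sum>v\<in>e. 1 / real (degree E v)) = n" .
  have "(n - 2) / n * n = n - 2" unfolding n_def by simp
  then have "(\<Sum>e\<in>E. c / sqrt (\<Prod>u\<in>e. real (degree E u)) - 2 / (n - 1)
           - (n - 2) / n * (\<Sum>v\<in>e. 1 / real (degree E v)))
      = c * randic E - real (card E) * (2 / (n - 1)) - (n - 2)"
    unfolding randic_def sum_subtractf sum_distrib_left[symmetric] inv
    by (simp add: sum_distrib_left)
  also have "\<dots> = c * randic E - das_bound E"
    unfolding das_bound_def n_def by simp
  finally show ?thesis by simp
qed

text \<open>The contribution of an edge with end degrees p and q to c R(G) minus Das' bound.\<close>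

definition edge_gap :: "real \<Rightarrow> nat \<Rightarrow> nat \<Rightarrow> nat \<Rightarrow> real" where
  "edge_gap c n p q = c / sqrt (real p * real q) - 2 / (real n - 1)
     - (real n - 2) / real n * (1 / real p + 1 / real q)"

lemma das_bound_le_randic:
  fixes E :: "('a::finite) set set"
  assumes sg: "simple_graph E" and deg: "\<And>u. degree E u \<ge> 1"
    and gap: "\<And>a b. adj E a b \<Longrightarrow> edge_gap c CARD('a) (degree E a) (degree E b) \<ge> 0"
  shows "das_bound E \<le> c * randic E"
    and "das_bound E = c * randic E
           \<longleftrightarrow> (\<forall>a b. adj E a b \<longrightarrow> edge_gap c CARD('a) (degree E a) (degree E b) = 0)"
proof -
  define t where "t e = c / sqrt (\<Prod>u\<in>e. real (degree E u)) - 2 / (real CARD('a) - 1)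
    - (real CARD('a) - 2) / real CARD('a) * (\<Sum>v\<in>e. 1 / real (degree E v))" for e
  have t: "t {a, b} = edge_gap c CARD('a) (degree E a) (degree E b)" if "a \<noteq> b" for a b
    unfolding t_def edge_gap_def using that by simp
  have adj_t: "\<exists>a b. adj E a b \<and> t e = edge_gap c CARD('a) (degree E a) (degree E b)" if "e \<in> E" for e
  proof -
    obtain a b where "a \<noteq> b" "e = {a, b}" "adj E a b" using simple_graph_edgeE[OF sg \<open>e \<in> E\<close>] .
    then show ?thesis using t by blast
  qed
  have t0: "t e \<ge> 0" if "e \<in> E" for e using adj_t[OF that] gap by auto
  have sum: "c * randic E - das_bound E = (\<Sum>e\<in>E. t e)"
    unfolding t_def by (rule randic_minus_das_bound[OF deg])
  show "das_bound E \<le> c * randic E" using sum sum_nonneg[of E t] t0 by simp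
  have "das_bound E = c * randic E \<longleftrightarrow> (\<Sum>e\<in>E. t e) = 0" using sum by auto
  also have "\<dots> \<longleftrightarrow> (\<forall>e\<in>E. t e = 0)"
    using t0 by (intro sum_nonneg_eq_0_iff) auto
  also have "\<dots> \<longleftrightarrow> (\<forall>a b. adj E a b \<longrightarrow> edge_gap c CARD('a) (degree E a) (degree E b) = 0)"
  proof (intro iffI allI impI ballI)
    fix a b assume "\<forall>e\<in>E. t e = 0" "adj E a b"
    then show "edge_gap c CARD('a) (degree E a) (degree E b) = 0"
      using t[OF adj_imp_neq[OF sg]] unfolding adj_def by metis
  next
    fix e assume "\<forall>a b. adj E a b \<longrightarrow> edge_gap c CARD('a) (degree E a) (degree E b) = 0" "e \<in> E"
    then show "t e = 0" using adj_t by fastforce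
  qed
  finally show "das_bound E = c * randic E
           \<longleftrightarrow> (\<forall>a b. adj E a b \<longrightarrow> edge_gap c CARD('a) (degree E a) (degree E b) = 0)" .
qed

section \<open>The edge inequality\<close>

text \<open>Bounding x^2 on [a,1] by its chord (1 + a) x - a leaves a bilinear function, which is
  nonnegative on the square as soon as it is at the corners.\<close>

lemma quadratic_nonneg_on_square:
  fixes a b c k x y :: real
  assumes "a < 1" "0 < k" "a \<le> x" "x \<le> 1" "a \<le> y" "y \<le> 1"
    and "c - b - 2 * k \<ge> 0" "c * a - b - k * (1 + a^2) \<ge> 0" "c * a^2 - b - 2 * k * a^2 \<ge> 0"
  shows "c * x * y - b - k * (x^2 + y^2) \<ge> 0"
    and "c * x * y - b - k * (x^2 + y^2) = 0 \<Longrightarrow> x \<in> {a, 1} \<and> y \<in> {a, 1}"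
proof -
  define G where "G = c * x * y - b - k * ((1 + a) * x - a) - k * ((1 + a) * y - a)"
  have F: "c * x * y - b - k * (x^2 + y^2) = G + k * ((x - a) * (1 - x)) + k * ((y - a) * (1 - y))"
    unfolding G_def by (simp add: algebra_simps power2_eq_square)
  have "G * (1 - a)^2 = (1 - x) * (1 - y) * (c * a^2 - b - 2 * k * a^2)
      + ((x - a) * (1 - y) + (1 - x) * (y - a)) * (c * a - b - k * (1 + a^2))
      + (x - a) * (y - a) * (c - b - 2 * k)"
    unfolding G_def by (simp add: algebra_simps power2_eq_square)
  also have "\<dots> \<ge> 0"
    using assms by (intro add_nonneg_nonneg mult_nonneg_nonneg) auto
  finally have "G \<ge> 0" using assms(1) by (simp add: zero_le_mult_iff)
  moreover have "k * ((x - a) * (1 - x)) \<ge> 0" "k * ((y - a) * (1 - y)) \<ge> 0" using assms by auto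
  ultimately show "c * x * y - b - k * (x^2 + y^2) \<ge> 0" unfolding F by linarith
  assume "c * x * y - b - k * (x^2 + y^2) = 0"
  with \<open>G \<ge> 0\<close> have "k * ((x - a) * (1 - x)) = 0" "k * ((y - a) * (1 - y)) = 0"
    using assms unfolding F by (smt (verit) mult_nonneg_nonneg)+
  then show "x \<in> {a, 1} \<and> y \<in> {a, 1}" using assms(2) by auto
qed

lemma edge_gap_nonneg_from_corners:
  fixes n p q :: nat
  assumes n: "n \<ge> 3" and p: "1 \<le> p" "p \<le> n - 1" and q: "1 \<le> q" "q \<le> n - 1"
    and "edge_gap c n 1 1 \<ge> 0" "edge_gap c n 1 (n - 1) \<ge> 0" "edge_gap c n (n - 1) (n - 1) \<ge> 0"
  shows "edge_gap c n p q \<ge> 0"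
    and "edge_gap c n p q = 0 \<Longrightarrow> p \<in> {1, n - 1} \<and> q \<in> {1, n - 1}"
proof -
  define a where "a = 1 / sqrt (real n - 1)"
  define k where "k = (real n - 2) / real n"
  define s where "s p = 1 / sqrt (real p)" for p :: nat
  have n1: "real (n - 1) = real n - 1" using n by simp
  have gap: "edge_gap c n p q = c * s p * s q - 2 * a^2 - k * (s p ^ 2 + s q ^ 2)"
    if "1 \<le> p" "1 \<le> q" for p q
    using that n unfolding edge_gap_def a_def k_def s_def
    by (simp add: real_sqrt_mult power_divide)
  have s1: "s 1 = 1" and sa: "s (n - 1) = a" unfolding s_def a_def n1 by simp_all
  have range: "a \<le> s p" "s p \<le> 1" if "1 \<le> p" "p \<le> n - 1" for p
    using that unfolding sa[symmetric] unfolding s_def by (simp_all add: divide_left_mono)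
  have s_inj: "s p = s p' \<Longrightarrow> p = p'" for p p' unfolding s_def by simp
  have a1: "a < 1" and k0: "0 < k" using n unfolding a_def k_def by simp_all
  have F11: "c - 2 * a^2 - 2 * k \<ge> 0"
    using assms(6) gap[of 1 1] s1 by simp
  have F1a: "c * a - 2 * a^2 - k * (1 + a^2) \<ge> 0"
    using assms(7) gap[of 1 "n - 1"] s1 sa n by simp
  have Faa: "c * a^2 - 2 * a^2 - 2 * k * a^2 \<ge> 0"
    using assms(8) gap[of "n - 1" "n - 1"] sa n by (simp add: power2_eq_square)
  note square = quadratic_nonneg_on_square[OF a1 k0 range[OF p] range[OF q] F11 F1a Faa]
  show "edge_gap c n p q \<ge> 0"
    unfolding gap[OF p(1) q(1)] by (rule square(1))
  assume "edge_gap c n p q = 0"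
  then have "s p \<in> {a, 1} \<and> s q \<in> {a, 1}"
    unfolding gap[OF p(1) q(1)] by (rule square(2))
  then show "p \<in> {1, n - 1} \<and> q \<in> {1, n - 1}"
    using s_inj unfolding s1[symmetric] sa[symmetric] by blast
qed

lemma edge_gap_commute: "edge_gap c n p q = edge_gap c n q p"
  unfolding edge_gap_def by (simp add: mult.commute add.commute)

lemma sqrt_11_gt: "sqrt 11 > (36 / 11 :: real)"
  by (rule real_less_rsqrt) (simp add: power2_eq_square)

lemma edge_gap_K12:
  assumes "1 \<le> p" "p \<le> 11" "1 \<le> q" "q \<le> 11"
  shows "edge_gap (11 / 3) 12 p q \<ge> 0"
    and "edge_gap (11 / 3) 12 p q = 0 \<longleftrightarrow> p = 11 \<and> q = 11"
proof -
  have c11: "edge_gap (11 / 3) 12 1 1 > 0" by (simp add: edge_gap_def)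
  have "11 / (3 * sqrt 11) = sqrt 11 / (3 :: real)"
    by (simp add: field_simps)
  then have c1n: "edge_gap (11 / 3) 12 1 11 > 0"
    using sqrt_11_gt by (simp add: edge_gap_def)
  have cnn: "edge_gap (11 / 3) 12 11 11 = 0" by (simp add: edge_gap_def)
  have pq: "1 \<le> p" "p \<le> 12 - 1" "1 \<le> q" "q \<le> 12 - 1" using assms by simp_all
  note corners = edge_gap_nonneg_from_corners[OF _ pq, of "11 / 3"]
  show "edge_gap (11 / 3) 12 p q \<ge> 0" using corners(1) c11 c1n cnn by simp
  show "edge_gap (11 / 3) 12 p q = 0 \<longleftrightarrow> p = 11 \<and> q = 11"
  proof
    assume gap0: "edge_gap (11 / 3) 12 p q = 0"
    then have "p \<in> {1, 11} \<and> q \<in> {1, 11}" using corners(2) c11 c1n cnn by simp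
    then show "p = 11 \<and> q = 11" using gap0 c11 c1n edge_gap_commute by auto
  qed (simp add: cnn)
qed

lemma star_constant_gt:
  fixes n :: nat
  assumes "n \<ge> 13"
  shows "2 + 2 * ((real n - 2) / real n) < real n / sqrt (real n - 1)"
proof -
  obtain t where t: "n = t + 13" using assms by (metis add.commute le_iff_add)
  have "real n ^ 4 - 16 * (real n - 1)^3
      = real t ^ 4 + 36 * real t ^ 3 + 438 * real t ^ 2 + 1876 * real t + 913"
    unfolding t by (simp add: algebra_simps power2_eq_square power3_eq_cube power4_eq_xxxx)
  moreover have "real t ^ 4 + 36 * real t ^ 3 + 438 * real t ^ 2 + 1876 * real t + 913 > 0"
    by (intro add_nonneg_pos add_nonneg_nonneg) auto
  ultimately have "16 * (real n - 1)^3 < real n ^ 4" by linarith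
  then have "((4 * real n - 4) * sqrt (real n - 1))^2 < (real n ^ 2)^2"
    using assms by (simp add: power_mult_distrib algebra_simps power2_eq_square power3_eq_cube power4_eq_xxxx)
  then have "(4 * real n - 4) * sqrt (real n - 1) < real n ^ 2"
    by (rule power_less_imp_less_base) simp
  then show ?thesis using assms by (simp add: field_simps power2_eq_square)
qed

lemma edge_gap_star:
  fixes n p q :: nat
  defines "c \<equiv> real n / sqrt (real n - 1)"
  assumes n: "n \<ge> 13" and pq: "1 \<le> p" "p \<le> n - 1" "1 \<le> q" "q \<le> n - 1"
  shows "edge_gap c n p q \<ge> 0"
    and "edge_gap c n p q = 0 \<longleftrightarrow> (p = 1 \<and> q = n - 1) \<or> (p = n - 1 \<and> q = 1)"
proof -
  define k where "k = (real n - 2) / real n"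
  have n1: "real (n - 1) = real n - 1" using n by simp
  have s: "sqrt (real n - 1) * sqrt (real n - 1) = real n - 1" using n by simp
  have "c > 2 + 2 * k" unfolding c_def k_def using star_constant_gt[OF n] .
  moreover have "2 / (real n - 1) < 2" using n by (simp add: field_simps)
  moreover have "edge_gap c n 1 1 = c - 2 / (real n - 1) - 2 * k"
    unfolding edge_gap_def k_def by simp
  ultimately have c11: "edge_gap c n 1 1 > 0" by linarith
  have sq: "sqrt (real (n - 1) * real (n - 1)) = real n - 1" using n by simp
  have "edge_gap c n (n - 1) (n - 1)
      = c / (real n - 1) - 2 / (real n - 1) - k * (1 / (real n - 1) + 1 / (real n - 1))"
    unfolding edge_gap_def sq unfolding n1 k_def ..
  also have "\<dots> = (c - 2 - 2 * k) / (real n - 1)"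
    by (simp add: diff_divide_distrib)
  finally have cnn: "edge_gap c n (n - 1) (n - 1) > 0" using n \<open>c > 2 + 2 * k\<close> by simp
  have "c / sqrt (real n - 1) = real n / (real n - 1)"
    unfolding c_def divide_divide_eq_left s ..
  moreover have "1 + 1 / (real n - 1) = real n / (real n - 1)" using n by (simp add: field_simps)
  ultimately have "edge_gap c n 1 (n - 1)
      = (real n - 2) / (real n - 1) - (real n - 2) / real n * (real n / (real n - 1))"
    unfolding edge_gap_def n1 by (simp add: diff_divide_distrib)
  then have c1n: "edge_gap c n 1 (n - 1) = 0" using n by simp
  note corners = edge_gap_nonneg_from_corners[OF _ pq, of c]
  show "edge_gap c n p q \<ge> 0" using corners(1) n c11 c1n cnn by simp
  show "edge_gap c n p q = 0 \<longleftrightarrow> (p = 1 \<and> q = n - 1) \<or> (p = n - 1 \<and> q = 1)"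
  proof
    assume gap0: "edge_gap c n p q = 0"
    then have "p \<in> {1, n - 1} \<and> q \<in> {1, n - 1}" using corners(2) n c11 c1n cnn by simp
    then show "(p = 1 \<and> q = n - 1) \<or> (p = n - 1 \<and> q = 1)" using gap0 c11 cnn by auto
  qed (use c1n edge_gap_commute in auto)
qed

section \<open>Complete graphs and stars\<close>

lemma complete_graph_iff_neighbours:
  assumes sg: "simple_graph E"
  shows "is_complete_graph E \<longleftrightarrow> (\<forall>u. neighbours E u = UNIV - {u})"
proof
  assume complete: "is_complete_graph E"
  show "\<forall>u. neighbours E u = UNIV - {u}"
  proof
    fix u
    have "UNIV - {u} \<subseteq> neighbours E u"
      using complete unfolding is_complete_graph_def neighbours_def by auto
    then show "neighbours E u = UNIV - {u}" using neighbours_subset[OF sg, of u] by auto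
  qed
next
  assume nbrs: "\<forall>u. neighbours E u = UNIV - {u}"
  show "is_complete_graph E" unfolding is_complete_graph_def
  proof (intro allI impI)
    fix u v :: 'a assume "u \<noteq> v"
    then have "v \<in> neighbours E u" using nbrs by simp
    then show "adj E u v" by (simp add: neighbours_def)
  qed
qed

lemma complete_graph_iff_degrees:
  fixes E :: "('a::finite) set set"
  assumes sg: "simple_graph E" and conn: "connected_graph E" and n: "CARD('a) \<ge> 2"
  shows "is_complete_graph E
    \<longleftrightarrow> (\<forall>a b. adj E a b \<longrightarrow> degree E a = CARD('a) - 1 \<and> degree E b = CARD('a) - 1)"
proof -
  have "is_complete_graph E \<longleftrightarrow> (\<forall>u. degree E u = CARD('a) - 1)"
    unfolding complete_graph_iff_neighbours[OF sg] degree_eq_card_iff[OF sg] ..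
  also have "\<dots> \<longleftrightarrow> (\<forall>a b. adj E a b \<longrightarrow> degree E a = CARD('a) - 1 \<and> degree E b = CARD('a) - 1)"
  proof
    assume full: "\<forall>a b. adj E a b \<longrightarrow> degree E a = CARD('a) - 1 \<and> degree E b = CARD('a) - 1"
    show "\<forall>u. degree E u = CARD('a) - 1"
    proof
      fix u
      obtain v where "adj E u v" by (rule connected_graph_has_neighbour[OF conn n])
      then show "degree E u = CARD('a) - 1" using full by blast
    qed
  qed simp
  finally show ?thesis .
qed

lemma complete_graph_das_bound_eigenvalue:
  fixes E :: "('a::finite) set set"
  assumes sg: "simple_graph E" and complete: "is_complete_graph E" and n: "CARD('a) \<ge> 2"
  shows "is_eigenvalue (signless_laplacian E) (das_bound E)"
proof -
  have "neighbours E u = UNIV - {u}" for u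
    using complete complete_graph_iff_neighbours[OF sg] by blast
  then have deg: "real (degree E u) = real CARD('a) - 1" for u
    using degree_eq_card_iff[OF sg] n by (simp add: of_nat_diff)
  have "2 * real (card E) = real CARD('a) * (real CARD('a) - 1)"
    using sum_degrees[OF sg] deg by simp
  then have das: "das_bound E = 2 * (real CARD('a) - 1)"
    unfolding das_bound_def using n by simp
  define x :: "real^'a" where "x = (\<chi> _. 1)"
  show ?thesis
  proof (rule is_eigenvalue_signless_laplacianI[OF sg, of x])
    have "x $ undefined \<noteq> 0" unfolding x_def by simp
    then show "x \<noteq> 0" by (auto simp del: vec_lambda_beta)
    fix u
    show "real (degree E u) * x $ u + (\<Sum>v\<in>neighbours E u. x $ v) = das_bound E * x $ u"
      unfolding das x_def using deg[of u] degree_eq_card_neighbours[OF sg, of u] by simp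
  qed
qed

lemma is_star_graph_iff_neighbours:
  fixes E :: "('a::finite) set set"
  assumes sg: "simple_graph E"
  shows "is_star_graph E \<longleftrightarrow> (\<exists>c. neighbours E c = UNIV - {c} \<and> (\<forall>v. v \<noteq> c \<longrightarrow> neighbours E v = {c}))"
proof
  assume "is_star_graph E"
  then obtain c where Ec: "E = {{c, v} |v. v \<noteq> c}" unfolding is_star_graph_def by blast
  then have "adj E a b \<longleftrightarrow> (a = c \<and> b \<noteq> c) \<or> (b = c \<and> a \<noteq> c)" for a b
    unfolding adj_def by (auto simp: doubleton_eq_iff)
  then show "\<exists>c. neighbours E c = UNIV - {c} \<and> (\<forall>v. v \<noteq> c \<longrightarrow> neighbours E v = {c})"
    unfolding neighbours_def by auto
next
  assume "\<exists>c. neighbours E c = UNIV - {c} \<and> (\<forall>v. v \<noteq> c \<longrightarrow> neighbours E v = {c})"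
  then obtain c where centre: "neighbours E c = UNIV - {c}"
    and leaves: "\<And>v. v \<noteq> c \<Longrightarrow> neighbours E v = {c}" by blast
  have "E = {{c, v} |v. v \<noteq> c}"
  proof (intro set_eqI iffI)
    fix e assume "e \<in> E"
    then obtain a b where "a \<noteq> b" "e = {a, b}" "adj E a b" using simple_graph_edgeE[OF sg] by blast
    then show "e \<in> {{c, v} |v. v \<noteq> c}"
      using leaves[of a] unfolding neighbours_def by (cases "a = c") (auto simp: insert_commute)
  next
    fix e assume "e \<in> {{c, v} |v. v \<noteq> c}"
    then show "e \<in> E" using centre unfolding neighbours_def adj_def by auto
  qed
  then show "is_star_graph E" unfolding is_star_graph_def by blast
qed

lemma star_graph_iff_degrees:
  fixes E :: "('a::finite) set set"
  assumes sg: "simple_graph E" and conn: "connected_graph E" and n: "CARD('a) \<ge> 3"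
  shows "is_star_graph E \<longleftrightarrow> (\<forall>a b. adj E a b \<longrightarrow>
      (degree E a = 1 \<and> degree E b = CARD('a) - 1) \<or> (degree E a = CARD('a) - 1 \<and> degree E b = 1))"
    (is "_ \<longleftrightarrow> (\<forall>a b. adj E a b \<longrightarrow> ?leaf_centre a b)")
proof
  assume "is_star_graph E"
  then obtain c where centre: "neighbours E c = UNIV - {c}"
    and leaves: "\<And>v. v \<noteq> c \<Longrightarrow> neighbours E v = {c}"
    using is_star_graph_iff_neighbours[OF sg] by blast
  have deg_c: "degree E c = CARD('a) - 1" unfolding degree_eq_card_iff[OF sg] by (rule centre)
  have deg_v: "degree E v = 1" if "v \<noteq> c" for v
    using leaves[OF that] degree_eq_card_neighbours[OF sg] by simp
  show "\<forall>a b. adj E a b \<longrightarrow> ?leaf_centre a b"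
  proof (intro allI impI)
    fix a b assume "adj E a b"
    then have "a \<noteq> b" "b \<in> neighbours E a" by (simp_all add: adj_imp_neq[OF sg] neighbours_def)
    then show "?leaf_centre a b" using leaves[of a] deg_c deg_v by (cases "a = c") auto
  qed
next
  assume degs: "\<forall>a b. adj E a b \<longrightarrow> ?leaf_centre a b"
  have "CARD('a) \<ge> 2" using n by simp
  then obtain b where "adj E undefined b" by (rule connected_graph_has_neighbour[OF conn])
  then obtain c where deg_c: "degree E c = CARD('a) - 1" using degs by blast
  then have centre: "neighbours E c = UNIV - {c}" unfolding degree_eq_card_iff[OF sg] .
  have "neighbours E v = {c}" if "v \<noteq> c" for v
  proof -
    have "v \<in> neighbours E c" using centre that by simp
    then have "adj E c v" "c \<in> neighbours E v" by (simp_all add: neighbours_def adj_commute)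
    moreover have "CARD('a) - 1 \<noteq> 1" using n by simp
    ultimately have "card (neighbours E v) = 1"
      using degs deg_c degree_eq_card_neighbours[OF sg] by metis
    then obtain w where "neighbours E v = {w}" by (rule card_1_singletonE)
    with \<open>c \<in> neighbours E v\<close> show ?thesis by simp
  qed
  with centre show "is_star_graph E" unfolding is_star_graph_iff_neighbours[OF sg] by blast
qed

lemma star_graph_das_bound_eigenvalue:
  fixes E :: "('a::finite) set set"
  assumes sg: "simple_graph E" and star: "is_star_graph E" and n: "CARD('a) \<ge> 2"
  shows "is_eigenvalue (signless_laplacian E) (das_bound E)"
proof -
  obtain c where centre: "neighbours E c = UNIV - {c}"
    and leaves: "\<And>v. v \<noteq> c \<Longrightarrow> neighbours E v = {c}"
    using is_star_graph_iff_neighbours[OF sg] star by blast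
  define m where "m = real CARD('a) - 1"
  have m: "m \<ge> 1" unfolding m_def using n by simp
  have card_leaves: "real (card (UNIV - {c})) = m" unfolding m_def by (simp add: card_Diff_singleton)
  have deg_c: "real (degree E c) = m" using degree_eq_card_neighbours[OF sg] centre card_leaves by simp
  have deg_v: "degree E v = 1" if "v \<noteq> c" for v
    using degree_eq_card_neighbours[OF sg] leaves[OF that] by simp
  have "(\<Sum>v\<in>UNIV. real (degree E v)) = real (degree E c) + (\<Sum>v\<in>UNIV - {c}. real (degree E v))"
    by (simp add: sum.remove)
  also have "\<dots> = 2 * m" using deg_c deg_v card_leaves by simp
  finally have "2 * real (card E) = 2 * m" unfolding sum_degrees[OF sg] .
  moreover have "real CARD('a) = m + 1" unfolding m_def by simp
  ultimately have das: "das_bound E = m + 1"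
    unfolding das_bound_def using m by simp
  define x :: "real^'a" where "x = (\<chi> v. if v = c then m else 1)"
  show ?thesis
  proof (rule is_eigenvalue_signless_laplacianI[OF sg, of x])
    have "x $ c \<noteq> 0" using m unfolding x_def by simp
    then show "x \<noteq> 0" by (auto simp del: vec_lambda_beta)
    fix u
    show "real (degree E u) * x $ u + (\<Sum>v\<in>neighbours E u. x $ v) = das_bound E * x $ u"
    proof (cases "u = c")
      case True
      have "(\<Sum>v\<in>neighbours E u. x $ v) = m"
        unfolding True centre x_def using card_leaves by simp
      then show ?thesis using True deg_c unfolding das x_def by (simp add: algebra_simps)
    qed (simp add: leaves deg_v das x_def)
  qed
qed

lemma q_index_div_randic_le:
  fixes E :: "('a::finite) set set"
  assumes sg: "simple_graph E" and conn: "connected_graph E" and n: "CARD('a) \<ge> 2"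
    and gap: "\<And>p q. 1 \<le> p \<Longrightarrow> p \<le> CARD('a) - 1 \<Longrightarrow> 1 \<le> q \<Longrightarrow> q \<le> CARD('a) - 1
                \<Longrightarrow> edge_gap c CARD('a) p q \<ge> 0"
  shows "q_index E / randic E \<le> c"
    and "q_index E / randic E = c \<longleftrightarrow>
           (\<forall>a b. adj E a b \<longrightarrow> edge_gap c CARD('a) (degree E a) (degree E b) = 0)
           \<and> is_eigenvalue (signless_laplacian E) (das_bound E)"
proof -
  have deg: "1 \<le> degree E u" "degree E u \<le> CARD('a) - 1" for u
    using degree_ge_one[OF sg conn n] degree_le_card[OF sg] by auto
  note das = das_bound_le_randic[OF sg deg(1), of c, OF gap[OF deg deg]]
  have R: "randic E > 0" by (rule randic_pos[OF sg conn n])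
  have q: "q_index E \<le> das_bound E" by (rule q_index_le_das_bound[OF sg deg(1) n])
  show "q_index E / randic E \<le> c" using q das(1) R by (simp add: pos_divide_le_eq)
  have "q_index E / randic E = c \<longleftrightarrow> q_index E = das_bound E \<and> das_bound E = c * randic E"
    using q das(1) R by (auto simp: divide_eq_eq)
  then show "q_index E / randic E = c \<longleftrightarrow>
           (\<forall>a b. adj E a b \<longrightarrow> edge_gap c CARD('a) (degree E a) (degree E b) = 0)
           \<and> is_eigenvalue (signless_laplacian E) (das_bound E)"
    unfolding das(2) q_index_eq_das_bound_iff[OF sg deg(1) n] by blast
qed

lemma q_index_div_randic_K12:
  fixes E :: "('a::finite) set set"
  assumes sg: "simple_graph E" and conn: "connected_graph E" and n: "CARD('a) = 12"
  shows "q_index E / randic E \<le> 11 / 3"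
    and "q_index E / randic E = 11 / 3 \<longleftrightarrow> is_complete_graph E"
proof -
  have n2: "CARD('a) \<ge> 2" using n by simp
  have deg: "1 \<le> degree E u" "degree E u \<le> 11" for u
    using degree_ge_one[OF sg conn n2] degree_le_card[OF sg] n by auto
  note ratio = q_index_div_randic_le[OF sg conn n2, of "11 / 3"]
  show "q_index E / randic E \<le> 11 / 3" using ratio(1) edge_gap_K12(1) n by simp
  show "q_index E / randic E = 11 / 3 \<longleftrightarrow> is_complete_graph E"
    using ratio(2) edge_gap_K12 deg complete_graph_iff_degrees[OF sg conn n2]
      complete_graph_das_bound_eigenvalue[OF sg _ n2] n by auto
qed

lemma q_index_div_randic_star:
  fixes E :: "('a::finite) set set"
  assumes sg: "simple_graph E" and conn: "connected_graph E" and n: "CARD('a) \<ge> 13"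
  defines "c \<equiv> real CARD('a) / sqrt (real CARD('a) - 1)"
  shows "q_index E / randic E \<le> c"
    and "q_index E / randic E = c \<longleftrightarrow> is_star_graph E"
proof -
  have n2: "CARD('a) \<ge> 2" and n3: "CARD('a) \<ge> 3" using n by simp_all
  have deg: "1 \<le> degree E u" "degree E u \<le> CARD('a) - 1" for u
    using degree_ge_one[OF sg conn n2] degree_le_card[OF sg] by auto
  note ratio = q_index_div_randic_le[OF sg conn n2, of c]
  note gap = edge_gap_star[OF n, folded c_def]
  show "q_index E / randic E \<le> c" using ratio(1) gap(1) by simp
  show "q_index E / randic E = c \<longleftrightarrow> is_star_graph E"
    using ratio(2) gap deg star_graph_iff_degrees[OF sg conn n3]
      star_graph_das_bound_eigenvalue[OF sg _ n2] by auto
qed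

theorem theorem1p2:
  fixes E :: "('a::finite) set set"
  assumes "simple_graph E" and "connected_graph E"
  shows "(CARD('a) = 12 \<longrightarrow>
            q_index E / randic E \<le> 11 / 3 \<and>
            (q_index E / randic E = 11 / 3 \<longleftrightarrow> is_complete_graph E))
       \<and> (CARD('a) \<ge> 13 \<longrightarrow>
            q_index E / randic E \<le> real CARD('a) / sqrt (real CARD('a) - 1) \<and>
            (q_index E / randic E = real CARD('a) / sqrt (real CARD('a) - 1)
               \<longleftrightarrow> is_star_graph E))"
  using q_index_div_randic_K12[OF assms] q_index_div_randic_star[OF assms] by blast

end
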